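(* Let $n\ge1$ and $D_n^{(\mathsf{cyc},\mathsf{exc})}(q,t)=\sum_{\sigma\in\mathfrak{D}_n}q^{\mathsf{cyc}\,\sigma}t^{\mathsf{exc}\,\sigma}$. Then $$D_{n}^{(\mathsf{cyc}, \mathsf{exc})}(q, t)=\left(\frac{1+xt}{1+x}\right)^{n}P^{(\mathsf{cyc}, \mathsf{cpk},\mathsf{exc})}\left(\mathfrak{D}_n; q, \frac{(1+x)^{2}t}{(x+t)(1+xt)},\frac{x+t}{1+xt}\right),$$ equivalently, $$P^{(\mathsf{cyc}, \mathsf{cpk},\mathsf{exc})}(\mathfrak{D}_n; q, x,t)=\left(\frac{1+u}{1+uv}\right)^{n}D_{n}^{(\mathsf{cyc}, \mathsf{exc})}(q, v),$$ where $u=\frac{1+t^{2}-2xt-(1-t)\sqrt{(1+t)^{2}-4xt}}{2(1-x)t}$ and $v=\frac{(1+t)^{2}-2xt-(1+t)\sqrt{(1+t)^{2}-4xt}}{2xt}$.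
   Context: $\mathfrak{D}_n$ is the set of derangements of $[n]$ (permutations with no fixed point). $P^{(\mathsf{stat}_1,\ldots,\mathsf{stat}_m)}(\Omega;t_1,\ldots,t_m)=\sum_{\sigma\in\Omega}\prod_j t_j^{\mathsf{stat}_j\sigma}$. For a permutation $\sigma$: $\mathsf{cyc}\,\sigma$ is its number of cycles, $\mathsf{exc}\,\sigma=\#\{i:\sigma(i)>i\}$, and $\mathsf{cpk}\,\sigma$ is the number of cyclic peaks, i.e. values $x$ with $\sigma^{-1}(x)<x>\sigma(x)$. *)

theory Defs
  imports Complex_Main "HOL-Combinatorics.Permutations" "HOL-Combinatorics.Orbits"
begin

definition derangements :: "nat \<Rightarrow> (nat \<Rightarrow> nat) set" where
  "derangements n = {\<sigma>. \<sigma> permutes {1..n} \<and> (\<forall>i\<in>{1..n}. \<sigma> i \<noteq> i)}"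

definition cyc :: "nat \<Rightarrow> (nat \<Rightarrow> nat) \<Rightarrow> nat" where
  "cyc n \<sigma> = card ((\<lambda>i. orbit \<sigma> i) ` {1..n})"

definition exc :: "nat \<Rightarrow> (nat \<Rightarrow> nat) \<Rightarrow> nat" where
  "exc n \<sigma> = card {i\<in>{1..n}. \<sigma> i > i}"

definition cpk :: "nat \<Rightarrow> (nat \<Rightarrow> nat) \<Rightarrow> nat" where
  "cpk n \<sigma> = card {x\<in>{1..n}. inv \<sigma> x < x \<and> \<sigma> x < x}"

end

theory Submission
  imports Defs
begin

text \<open>
  Every value z of a derangement is a cyclic peak, a cyclic valley, a cyclic double ascent
  (cda: \<open>inv \<sigma> z < z < \<sigma> z\<close>) or a cyclic double descent (cdd: \<open>\<sigma> z < z < inv \<sigma> z\<close>).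
  Cyclic valley hopping at a cdd k moves k forward along its cycle to just before the first
  later element exceeding k. This turns k into a cda and changes neither the cycles, nor the
  cyclic peaks, nor the type of any other value, and it is a bijection between the
  derangements with a cdd at k and those with a cda at k. Hence the sum over derangements of
  q^cyc w^cpk times the product of f over the cda and of g over the cdd depends on the
  position weights f, g only through f + g. Since exc = cpk + #cda and
  n = 2 cpk + #cda + #cdd, both sides of the theorem are such sums, with constant weights
  (t, 1) and ((x + t)/(1 + x), (1 + x t)/(1 + x)); both pairs add up to 1 + t.
\<close>

section \<open>Moving an element within its cycle\<close>

text \<open>In cycle notation, \<open>move_after \<sigma> k w\<close> deletes k from its cycle and reinserts it directly
  after w.\<close>

definition move_after :: "('a \<Rightarrow> 'a) \<Rightarrow> 'a \<Rightarrow> 'a \<Rightarrow> 'a \<Rightarrow> 'a" where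
  "move_after \<sigma> k w = \<sigma>(inv \<sigma> k := \<sigma> k, w := k, k := \<sigma> w)"

lemma move_after_inverses:
  assumes "bij \<sigma>" "\<sigma> k \<noteq> k" "w \<noteq> k" "\<sigma> w \<noteq> k"
  shows "move_after \<sigma> k w \<circ> move_after (inv \<sigma>) k (\<sigma> w) = id"
    and "move_after (inv \<sigma>) k (\<sigma> w) \<circ> move_after \<sigma> k w = id"
proof -
  have inv: "\<And>x. inv \<sigma> (\<sigma> x) = x" "\<And>x. \<sigma> (inv \<sigma> x) = x" "inv (inv \<sigma>) = \<sigma>"
    using assms(1) by (simp_all add: bij_is_inj bij_is_surj surj_f_inv_f inv_inv_eq)
  have inj: "\<And>x y. \<sigma> x = \<sigma> y \<longleftrightarrow> x = y" "\<And>x y. inv \<sigma> x = inv \<sigma> y \<longleftrightarrow> x = y"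
    using assms(1) bij_imp_bij_inv[OF assms(1)] by (simp_all add: bij_is_inj inj_eq)
  have "inv \<sigma> k \<noteq> k" "inv \<sigma> k \<noteq> w" "\<sigma> k \<noteq> \<sigma> w"
    using assms(2-4) inv by metis+
  then show "move_after \<sigma> k w \<circ> move_after (inv \<sigma>) k (\<sigma> w) = id"
    and "move_after (inv \<sigma>) k (\<sigma> w) \<circ> move_after \<sigma> k w = id"
    using assms(2-4) inv inj by (auto simp: fun_eq_iff move_after_def)
qed

lemma inv_move_after:
  assumes "bij \<sigma>" "\<sigma> k \<noteq> k" "w \<noteq> k" "\<sigma> w \<noteq> k"
  shows "inv (move_after \<sigma> k w) = move_after (inv \<sigma>) k (\<sigma> w)"
  using move_after_inverses[OF assms] by (rule inv_unique_comp)

lemma bij_move_after: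
  assumes "bij \<sigma>" "\<sigma> k \<noteq> k" "w \<noteq> k" "\<sigma> w \<noteq> k"
  shows "bij (move_after \<sigma> k w)"
  using o_bij[OF move_after_inverses(2,1)[OF assms]] .

lemma move_after_move_after_inv:
  assumes "bij \<sigma>" "\<sigma> k \<noteq> k" "w \<noteq> k" "\<sigma> w \<noteq> k"
  shows "move_after (move_after \<sigma> k w) k (inv \<sigma> k) = \<sigma>"
proof -
  have "inv (move_after \<sigma> k w) k = move_after (inv \<sigma>) k (\<sigma> w) k"
    by (simp only: inv_move_after[OF assms])
  then have "inv (move_after \<sigma> k w) k = w"
    using assms(1,3) by (simp add: move_after_def bij_is_inj)
  moreover have "\<sigma> (inv \<sigma> k) = k" "inv \<sigma> k \<noteq> w"
    using assms by (metis bij_inv_eq_iff)+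
  ultimately show ?thesis
    using assms(2,3) by (auto simp: fun_eq_iff move_after_def)
qed

lemma permutes_move_after:
  assumes "\<sigma> permutes S" "w \<in> S" "\<sigma> k \<noteq> k" "w \<noteq> k" "\<sigma> w \<noteq> k"
  shows "move_after \<sigma> k w permutes S"
proof -
  have "bij \<sigma>" and "k \<in> S"
    using assms(1,3) permutes_bij permutes_not_in by metis+
  have "inv \<sigma> k \<in> S"
    using permutes_in_image[OF permutes_inv[OF assms(1)]] \<open>k \<in> S\<close> by simp
  have "\<forall>y. \<exists>!x. move_after \<sigma> k w x = y"
    using bij_move_after[OF \<open>bij \<sigma>\<close> assms(3-5)] unfolding bij_iff .
  moreover have "move_after \<sigma> k w x = x" if "x \<notin> S" for x
    using that assms(1,2) \<open>k \<in> S\<close> \<open>inv \<sigma> k \<in> S\<close>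
    by (auto simp: move_after_def permutes_not_in)
  ultimately show ?thesis
    unfolding permutes_def by blast
qed

lemma orbit_move_after_subset:
  assumes "permutation \<sigma>" "w \<in> orbit \<sigma> k"
  shows "orbit (move_after \<sigma> k w) z \<subseteq> orbit \<sigma> z"
proof -
  have one_step: "move_after \<sigma> k w u \<in> orbit \<sigma> u" for u
  proof -
    have "k \<in> orbit \<sigma> (inv \<sigma> k)"
      using orbit.base[of \<sigma> "inv \<sigma> k"] assms(1)
      by (simp add: permutation_bijective bij_is_surj surj_f_inv_f)
    moreover have "k \<in> orbit \<sigma> w"
      using orbit_swap[OF permutation_self_in_orbit[OF assms(1)] assms(2)] .
    ultimately show ?thesis
      using assms(2) by (auto simp: move_after_def intro: orbit.intros)
  qed
  show ?thesis
  proof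
    fix v assume "v \<in> orbit (move_after \<sigma> k w) z"
    then show "v \<in> orbit \<sigma> z"
    proof induction
      case base
      show ?case
        by (rule one_step)
    next
      case (step v)
      then show ?case
        using orbit_trans[OF one_step] by blast
    qed
  qed
qed

section \<open>Cyclic valley hopping\<close>

definition cda :: "('a::linorder \<Rightarrow> 'a) \<Rightarrow> 'a \<Rightarrow> bool" where
  "cda \<sigma> z \<longleftrightarrow> inv \<sigma> z < z \<and> z < \<sigma> z"

definition cdd :: "('a::linorder \<Rightarrow> 'a) \<Rightarrow> 'a \<Rightarrow> bool" where
  "cdd \<sigma> z \<longleftrightarrow> \<sigma> z < z \<and> z < inv \<sigma> z"

lemma cdd_inv_iff_cda: "bij \<tau> \<Longrightarrow> cdd (inv \<tau>) k \<longleftrightarrow> cda \<tau> k"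
  by (auto simp: cda_def cdd_def inv_inv_eq)

text \<open>If y is the first element after k on its cycle with \<open>k < y\<close>, then \<open>hop \<sigma> k\<close> moves k
  to sit just before y, that is, right after \<open>(\<sigma> ^^ hop_steps \<sigma> k) k\<close>.\<close>

definition hop_steps :: "('a::linorder \<Rightarrow> 'a) \<Rightarrow> 'a \<Rightarrow> nat" where
  "hop_steps \<sigma> k = (LEAST j. k < (\<sigma> ^^ Suc j) k)"

definition hop :: "('a::linorder \<Rightarrow> 'a) \<Rightarrow> 'a \<Rightarrow> 'a \<Rightarrow> 'a" where
  "hop \<sigma> k = move_after \<sigma> k ((\<sigma> ^^ hop_steps \<sigma> k) k)"

locale cdd_point =
  fixes \<sigma> :: "'a::linorder \<Rightarrow> 'a" and S :: "'a set" and k :: 'a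
  assumes perm: "\<sigma> permutes S" and fin: "finite S" and cdd_k: "cdd \<sigma> k"
begin

lemma permutation: "permutation \<sigma>"
  using perm fin permutation_permutes by blast

lemma k_in: "k \<in> S"
  using cdd_k permutes_not_in[OF perm] by (fastforce simp: cdd_def)

lemma iter_hop_steps_gt: "k < (\<sigma> ^^ Suc (hop_steps \<sigma> k)) k"
proof -
  have "inv \<sigma> k \<in> orbit \<sigma> k"
    using orbit.base[of "inv \<sigma>" k] orbit_inv_eq[OF permutation] by simp
  then obtain j where "0 < j" "k < (\<sigma> ^^ j) k"
    using cdd_k unfolding orbit_altdef cdd_def by auto
  then have "k < (\<sigma> ^^ Suc (j - 1)) k"
    by simp
  then show ?thesis
    unfolding hop_steps_def by (rule LeastI)
qed

lemma not_iter_gt_before_hop_steps: "j < hop_steps \<sigma> k \<Longrightarrow> \<not> k < (\<sigma> ^^ Suc j) k"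
  unfolding hop_steps_def by (rule not_less_Least)

lemma iter_less_hop_steps:
  assumes "0 < i" "i \<le> hop_steps \<sigma> k"
  shows "(\<sigma> ^^ i) k < k"
proof -
  have "(\<sigma> ^^ i) k \<noteq> k"
  proof
    assume "(\<sigma> ^^ i) k = k"
    then have "(\<sigma> ^^ Suc (hop_steps \<sigma> k - i)) k = (\<sigma> ^^ Suc (hop_steps \<sigma> k)) k"
      using assms(2) funpow_add[of "Suc (hop_steps \<sigma> k - i)" i \<sigma>] by (simp add: Suc_diff_le)
    then show False
      using not_iter_gt_before_hop_steps[of "hop_steps \<sigma> k - i"] iter_hop_steps_gt assms by simp
  qed
  moreover have "\<not> k < (\<sigma> ^^ Suc (i - 1)) k"
    using assms by (intro not_iter_gt_before_hop_steps) simp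
  ultimately show ?thesis
    using assms(1) by simp
qed

lemma hop_steps_pos: "0 < hop_steps \<sigma> k"
  using iter_hop_steps_gt cdd_k by (cases "hop_steps \<sigma> k") (auto simp: cdd_def)

lemma hop_pred_less: "(\<sigma> ^^ hop_steps \<sigma> k) k < k"
  using iter_less_hop_steps hop_steps_pos by simp

lemma move_after_conds:
  "bij \<sigma>" "\<sigma> k \<noteq> k" "(\<sigma> ^^ hop_steps \<sigma> k) k \<noteq> k" "\<sigma> ((\<sigma> ^^ hop_steps \<sigma> k) k) \<noteq> k"
  using permutes_bij[OF perm] cdd_k hop_pred_less iter_hop_steps_gt
  by (auto simp: cdd_def)

lemma hop_permutes: "hop \<sigma> k permutes S"
  unfolding hop_def
  by (rule permutes_move_after[OF perm permutes_in_funpow_image[OF perm k_in] move_after_conds(2-4)])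

lemma inv_hop: "inv (hop \<sigma> k) = move_after (inv \<sigma>) k ((\<sigma> ^^ Suc (hop_steps \<sigma> k)) k)"
  unfolding hop_def inv_move_after[OF move_after_conds] by simp

lemma cda_hop: "cda (hop \<sigma> k) k"
proof -
  have "hop \<sigma> k k = (\<sigma> ^^ Suc (hop_steps \<sigma> k)) k"
    by (simp add: hop_def move_after_def)
  moreover have "inv (hop \<sigma> k) k = (\<sigma> ^^ hop_steps \<sigma> k) k"
    using iter_hop_steps_gt by (simp add: inv_hop move_after_def permutes_inverses[OF perm])
  ultimately show ?thesis
    using iter_hop_steps_gt hop_pred_less by (simp add: cda_def)
qed

lemma hop_same_side:
  assumes "z \<noteq> k"
  shows "(hop \<sigma> k z < z \<longleftrightarrow> \<sigma> z < z) \<and> (z < hop \<sigma> k z \<longleftrightarrow> z < \<sigma> z)"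
proof -
  have "\<sigma> (inv \<sigma> k) = k"
    by (simp add: permutes_inverses[OF perm])
  then show ?thesis
    using assms cdd_k hop_pred_less iter_hop_steps_gt
    by (auto simp: hop_def move_after_def cdd_def)
qed

lemma orbit_hop_subset: "orbit (hop \<sigma> k) z \<subseteq> orbit \<sigma> z"
proof -
  have "(\<sigma> ^^ hop_steps \<sigma> k) k \<in> orbit \<sigma> k"
    using hop_steps_pos unfolding orbit_altdef by auto
  then show ?thesis
    unfolding hop_def by (rule orbit_move_after_subset[OF permutation])
qed

lemma inv_hop_eq:
  "inv (hop \<sigma> k) = (inv \<sigma>)(\<sigma> k := inv \<sigma> k, (\<sigma> ^^ Suc (hop_steps \<sigma> k)) k := k,
     k := (\<sigma> ^^ hop_steps \<sigma> k) k)"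
  by (simp add: inv_hop move_after_def permutes_inv_inv[OF perm] permutes_inverses[OF perm])

lemma iter_inv_hop:
  assumes "0 < i" "i \<le> hop_steps \<sigma> k"
  shows "(inv (hop \<sigma> k) ^^ i) k = (\<sigma> ^^ (Suc (hop_steps \<sigma> k) - i)) k"
  using assms
proof (induction i rule: nat_induct_non_zero)
  case 1
  show ?case
    using iter_hop_steps_gt by (simp add: inv_hop_eq)
next
  case (Suc i)
  define u where "u = (\<sigma> ^^ (hop_steps \<sigma> k - i)) k"
  have "(\<sigma> ^^ (Suc (hop_steps \<sigma> k) - i)) k = \<sigma> u"
    using Suc.prems by (simp add: u_def Suc_diff_le)
  moreover have "u < k"
    using Suc iter_less_hop_steps unfolding u_def by simp
  moreover have "\<sigma> u < k"
    using Suc iter_less_hop_steps[of "Suc (hop_steps \<sigma> k - i)"] unfolding u_def by simp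
  ultimately show ?case
    using Suc iter_hop_steps_gt permutes_inj[OF perm]
    by (auto simp: inv_hop_eq u_def permutes_inverses[OF perm] inj_eq)
qed

lemma iter_inv_hop_past: "(inv (hop \<sigma> k) ^^ Suc (hop_steps \<sigma> k)) k = inv \<sigma> k"
  using iter_inv_hop[OF hop_steps_pos order.refl] cdd_k iter_hop_steps_gt
  by (auto simp: inv_hop_eq cdd_def)

lemma hop_steps_inv_hop: "hop_steps (inv (hop \<sigma> k)) k = hop_steps \<sigma> k"
  unfolding hop_steps_def[of "inv (hop \<sigma> k)"]
proof (rule Least_equality)
  show "k < (inv (hop \<sigma> k) ^^ Suc (hop_steps \<sigma> k)) k"
    using iter_inv_hop_past cdd_k by (simp add: cdd_def)
  show "hop_steps \<sigma> k \<le> j" if "k < (inv (hop \<sigma> k) ^^ Suc j) k" for j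
    using that iter_inv_hop[of "Suc j"] iter_less_hop_steps[of "hop_steps \<sigma> k - j"]
    by (cases "hop_steps \<sigma> k \<le> j") auto
qed

lemma hop_inv_hop: "hop (inv (hop \<sigma> k)) k = inv \<sigma>"
proof -
  have "hop (inv (hop \<sigma> k)) k = move_after (inv (hop \<sigma> k)) k (inv (inv \<sigma>) k)"
    using iter_inv_hop[OF hop_steps_pos order.refl]
    by (simp add: hop_def[of "inv (hop \<sigma> k)"] hop_steps_inv_hop permutes_inv_inv[OF perm])
  also have "\<dots> = inv \<sigma>"
    unfolding inv_hop
  proof (rule move_after_move_after_inv)
    show "bij (inv \<sigma>)" "inv \<sigma> k \<noteq> k" "(\<sigma> ^^ Suc (hop_steps \<sigma> k)) k \<noteq> k"
      "inv \<sigma> ((\<sigma> ^^ Suc (hop_steps \<sigma> k)) k) \<noteq> k"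
      using bij_imp_bij_inv[OF move_after_conds(1)] cdd_k hop_pred_less iter_hop_steps_gt
      by (auto simp: cdd_def permutes_inverses[OF perm])
  qed
  finally show ?thesis .
qed

lemma cdd_point_inv_hop: "cdd_point (inv (hop \<sigma> k)) S k"
proof
  show "inv (hop \<sigma> k) permutes S"
    using permutes_inv[OF hop_permutes] .
  show "cdd (inv (hop \<sigma> k)) k"
    using cda_hop by (simp add: cda_def cdd_def permutes_inv_inv[OF hop_permutes])
qed (rule fin)

lemma orbit_hop: "orbit (hop \<sigma> k) z = orbit \<sigma> z"
proof
  interpret inv_hop: cdd_point "inv (hop \<sigma> k)" S k
    by (rule cdd_point_inv_hop)
  have "orbit (inv \<sigma>) z \<subseteq> orbit (inv (hop \<sigma> k)) z"
    using inv_hop.orbit_hop_subset unfolding hop_inv_hop .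
  then show "orbit \<sigma> z \<subseteq> orbit (hop \<sigma> k) z"
    using orbit_inv_eq[OF permutation] orbit_inv_eq[OF inv_hop.permutation]
      permutes_inv_inv[OF hop_permutes] by simp
qed (rule orbit_hop_subset)

lemma inv_hop_same_side:
  assumes "z \<noteq> k"
  shows "(inv (hop \<sigma> k) z < z \<longleftrightarrow> inv \<sigma> z < z) \<and> (z < inv (hop \<sigma> k) z \<longleftrightarrow> z < inv \<sigma> z)"
proof -
  interpret inv_hop: cdd_point "inv (hop \<sigma> k)" S k
    by (rule cdd_point_inv_hop)
  show ?thesis
    using inv_hop.hop_same_side[OF assms] unfolding hop_inv_hop by blast
qed

lemma cda_hop_iff: "z \<noteq> k \<Longrightarrow> cda (hop \<sigma> k) z \<longleftrightarrow> cda \<sigma> z"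
  using hop_same_side inv_hop_same_side by (simp add: cda_def)

lemma cdd_hop_iff: "z \<noteq> k \<Longrightarrow> cdd (hop \<sigma> k) z \<longleftrightarrow> cdd \<sigma> z"
  using hop_same_side inv_hop_same_side by (simp add: cdd_def)

lemma cyclic_peak_hop_iff:
  "inv (hop \<sigma> k) z < z \<and> hop \<sigma> k z < z \<longleftrightarrow> inv \<sigma> z < z \<and> \<sigma> z < z"
proof (cases "z = k")
  case True
  then show ?thesis
    using cda_hop cdd_k by (auto simp: cda_def cdd_def)
next
  case False
  then show ?thesis
    using hop_same_side inv_hop_same_side by blast
qed

end

definition cda_set :: "nat \<Rightarrow> (nat \<Rightarrow> nat) \<Rightarrow> nat set" where
  "cda_set n \<sigma> = {z \<in> {1..n}. cda \<sigma> z}"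

definition cdd_set :: "nat \<Rightarrow> (nat \<Rightarrow> nat) \<Rightarrow> nat set" where
  "cdd_set n \<sigma> = {z \<in> {1..n}. cdd \<sigma> z}"

lemma finite_cda_set [simp]: "finite (cda_set n \<sigma>)"
  by (simp add: cda_set_def)

lemma finite_cdd_set [simp]: "finite (cdd_set n \<sigma>)"
  by (simp add: cdd_set_def)

lemma finite_derangements: "finite (derangements n)"
  using finite_permutations[of "{1..n}"] by (rule rev_finite_subset) (auto simp: derangements_def)

lemma derangement_permutes: "\<sigma> \<in> derangements n \<Longrightarrow> \<sigma> permutes {1..n}"
  by (simp add: derangements_def)

lemma inv_derangement:
  assumes "\<sigma> \<in> derangements n"
  shows "inv \<sigma> \<in> derangements n"
proof -
  have "\<sigma> permutes {1..n}"
    using assms by (rule derangement_permutes)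
  then show ?thesis
    using assms by (auto simp: derangements_def permutes_inv permutes_inv_eq)
qed

lemma cdd_point_derangement:
  assumes "\<sigma> \<in> derangements n" "cdd \<sigma> k"
  shows "cdd_point \<sigma> {1..n} k"
  using derangement_permutes[OF assms(1)] finite_atLeastAtMost assms(2) by (rule cdd_point.intro)

lemma hop_derangement:
  assumes "\<sigma> \<in> derangements n" "cdd \<sigma> k"
  shows "hop \<sigma> k \<in> derangements n"
proof -
  interpret cdd_point \<sigma> "{1..n}" k
    using assms by (rule cdd_point_derangement)
  have "hop \<sigma> k z \<noteq> z" if "z \<in> {1..n}" for z
  proof (cases "z = k")
    case False
    then show ?thesis
      using hop_same_side[OF False] assms(1) that
      by (auto simp: derangements_def neq_iff)
  qed (use cda_hop in \<open>simp add: cda_def\<close>)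
  then show ?thesis
    using hop_permutes by (simp add: derangements_def)
qed

lemma cyc_hop: "\<sigma> \<in> derangements n \<Longrightarrow> cdd \<sigma> k \<Longrightarrow> cyc n (hop \<sigma> k) = cyc n \<sigma>"
  using cdd_point.orbit_hop[OF cdd_point_derangement] by (simp add: cyc_def)

lemma cpk_hop: "\<sigma> \<in> derangements n \<Longrightarrow> cdd \<sigma> k \<Longrightarrow> cpk n (hop \<sigma> k) = cpk n \<sigma>"
  using cdd_point.cyclic_peak_hop_iff[OF cdd_point_derangement] by (simp add: cpk_def)

lemma cda_set_hop:
  assumes "\<sigma> \<in> derangements n" "cdd \<sigma> k"
  shows "cda_set n (hop \<sigma> k) = insert k (cda_set n \<sigma>)"
proof -
  interpret cdd_point \<sigma> "{1..n}" k
    using assms by (rule cdd_point_derangement)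
  show ?thesis
  proof (rule set_eqI)
    show "z \<in> cda_set n (hop \<sigma> k) \<longleftrightarrow> z \<in> insert k (cda_set n \<sigma>)" for z
      using cda_hop_iff[of z] cda_hop k_in by (cases "z = k") (auto simp: cda_set_def)
  qed
qed

lemma cdd_set_hop:
  assumes "\<sigma> \<in> derangements n" "cdd \<sigma> k"
  shows "cdd_set n \<sigma> = insert k (cdd_set n (hop \<sigma> k))"
proof -
  interpret cdd_point \<sigma> "{1..n}" k
    using assms by (rule cdd_point_derangement)
  show ?thesis
  proof (rule set_eqI)
    show "z \<in> cdd_set n \<sigma> \<longleftrightarrow> z \<in> insert k (cdd_set n (hop \<sigma> k))" for z
      using cdd_hop_iff[of z] cdd_k k_in by (cases "z = k") (auto simp: cdd_set_def)
  qed
qed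

lemma bij_betw_hop:
  "bij_betw (\<lambda>\<sigma>. hop \<sigma> k) {\<sigma> \<in> derangements n. cdd \<sigma> k} {\<tau> \<in> derangements n. cda \<tau> k}"
proof (rule bij_betw_byWitness[where f' = "\<lambda>\<tau>. inv (hop (inv \<tau>) k)"])
  have inv_cdd: "inv \<tau> \<in> derangements n" "cdd (inv \<tau>) k"
    if "\<tau> \<in> {\<tau> \<in> derangements n. cda \<tau> k}" for \<tau>
    using that inv_derangement cdd_inv_iff_cda[OF permutes_bij[OF derangement_permutes]] by auto
  show "\<forall>\<sigma>\<in>{\<sigma> \<in> derangements n. cdd \<sigma> k}. inv (hop (inv (hop \<sigma> k)) k) = \<sigma>"
  proof
    fix \<sigma> assume "\<sigma> \<in> {\<sigma> \<in> derangements n. cdd \<sigma> k}"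
    then show "inv (hop (inv (hop \<sigma> k)) k) = \<sigma>"
      using cdd_point.hop_inv_hop[OF cdd_point_derangement] permutes_inv_inv[OF derangement_permutes]
      by auto
  qed
  show "\<forall>\<tau>\<in>{\<tau> \<in> derangements n. cda \<tau> k}. hop (inv (hop (inv \<tau>) k)) k = \<tau>"
  proof
    fix \<tau> assume "\<tau> \<in> {\<tau> \<in> derangements n. cda \<tau> k}"
    then show "hop (inv (hop (inv \<tau>) k)) k = \<tau>"
      using cdd_point.hop_inv_hop[OF cdd_point_derangement[OF inv_cdd]]
        permutes_inv_inv[OF derangement_permutes] by auto
  qed
  show "(\<lambda>\<sigma>. hop \<sigma> k) ` {\<sigma> \<in> derangements n. cdd \<sigma> k} \<subseteq> {\<tau> \<in> derangements n. cda \<tau> k}"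
    using hop_derangement cdd_point.cda_hop[OF cdd_point_derangement] by auto
  show "(\<lambda>\<tau>. inv (hop (inv \<tau>) k)) ` {\<tau> \<in> derangements n. cda \<tau> k}
      \<subseteq> {\<sigma> \<in> derangements n. cdd \<sigma> k}"
    using inv_derangement[OF hop_derangement[OF inv_cdd]]
      cdd_point.cdd_k[OF cdd_point.cdd_point_inv_hop[OF cdd_point_derangement[OF inv_cdd]]]
    by auto
qed

section \<open>Weighted sums over derangements\<close>

definition perm_weight ::
  "nat \<Rightarrow> 'b \<Rightarrow> 'b \<Rightarrow> (nat \<Rightarrow> 'b) \<Rightarrow> (nat \<Rightarrow> 'b) \<Rightarrow> (nat \<Rightarrow> nat) \<Rightarrow> 'b::comm_semiring_1" where
  "perm_weight n q w f g \<sigma> =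
     q ^ cyc n \<sigma> * w ^ cpk n \<sigma> * (\<Prod>z\<in>cda_set n \<sigma>. f z) * (\<Prod>z\<in>cdd_set n \<sigma>. g z)"

lemma perm_weight_const:
  "perm_weight n q w (\<lambda>_. a) (\<lambda>_. b) \<sigma> =
     q ^ cyc n \<sigma> * w ^ cpk n \<sigma> * a ^ card (cda_set n \<sigma>) * b ^ card (cdd_set n \<sigma>)"
  by (simp add: perm_weight_def)

lemma perm_weight_cong:
  assumes "\<And>z. z \<in> {1..n} \<Longrightarrow> f z = f' z \<and> g z = g' z"
  shows "perm_weight n q w f g \<sigma> = perm_weight n q w f' g' \<sigma>"
proof -
  have "prod f (cda_set n \<sigma>) = prod f' (cda_set n \<sigma>)" "prod g (cdd_set n \<sigma>) = prod g' (cdd_set n \<sigma>)"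
    using assms by (auto simp: cda_set_def cdd_set_def intro: prod.cong)
  then show ?thesis
    by (simp add: perm_weight_def)
qed

lemma perm_weight_hop:
  assumes "\<sigma> \<in> derangements n" "cdd \<sigma> k" "f k = g k"
  shows "perm_weight n q w f g (hop \<sigma> k) = perm_weight n q w f g \<sigma>"
proof -
  have "k \<notin> cda_set n \<sigma>" "k \<notin> cdd_set n (hop \<sigma> k)"
    using assms(2) cdd_point.cda_hop[OF cdd_point_derangement[OF assms(1,2)]]
    by (auto simp: cda_set_def cdd_set_def cda_def cdd_def)
  then show ?thesis
    using assms unfolding perm_weight_def
    by (simp add: cyc_hop cpk_hop cda_set_hop cdd_set_hop[OF assms(1,2)] ac_simps)
qed

lemma prod_fun_upd_one:
  assumes "finite A"
  shows "prod f A = (if k \<in> A then f k else 1) * prod (f(k := 1)) A"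
proof (cases "k \<in> A")
  case True
  have "prod (f(k := 1)) A = prod f (A - {k})"
    using prod.remove[OF assms True, of "f(k := 1)"] by (auto intro: prod.cong)
  then show ?thesis
    using prod.remove[OF assms True] True by simp
qed (auto intro: prod.cong)

lemma perm_weight_split:
  assumes "k \<in> {1..n}"
  shows "perm_weight n q w f g \<sigma> =
    (if cda \<sigma> k then f k else if cdd \<sigma> k then g k else 1) * perm_weight n q w (f(k := 1)) (g(k := 1)) \<sigma>"
proof -
  have "\<not> (cda \<sigma> k \<and> cdd \<sigma> k)"
    by (auto simp: cda_def cdd_def)
  then show ?thesis
    using assms prod_fun_upd_one[of "cda_set n \<sigma>" f k] prod_fun_upd_one[of "cdd_set n \<sigma>" g k]
    by (auto simp: perm_weight_def cda_set_def cdd_set_def mult_ac)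
qed

lemma sum_perm_weight_split:
  assumes "k \<in> {1..n}"
  shows "(\<Sum>\<sigma>\<in>derangements n. perm_weight n q w f g \<sigma>) =
    (f k + g k) * (\<Sum>\<sigma> | \<sigma> \<in> derangements n \<and> cdd \<sigma> k. perm_weight n q w (f(k := 1)) (g(k := 1)) \<sigma>)
    + (\<Sum>\<sigma> | \<sigma> \<in> derangements n \<and> \<not> cda \<sigma> k \<and> \<not> cdd \<sigma> k.
         perm_weight n q w (f(k := 1)) (g(k := 1)) \<sigma>)"
proof -
  define V where "V = perm_weight n q w (f(k := 1)) (g(k := 1))"
  define D1 where "D1 = {\<sigma> \<in> derangements n. cdd \<sigma> k}"
  define D2 where "D2 = {\<sigma> \<in> derangements n. cda \<sigma> k}"
  define D3 where "D3 = {\<sigma> \<in> derangements n. \<not> cda \<sigma> k \<and> \<not> cdd \<sigma> k}"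
  have exclusive: "\<not> (cda \<sigma> k \<and> cdd \<sigma> k)" for \<sigma>
    by (auto simp: cda_def cdd_def)
  have D: "derangements n = D1 \<union> (D2 \<union> D3)" "D1 \<inter> (D2 \<union> D3) = {}" "D2 \<inter> D3 = {}"
    using exclusive by (auto simp: D1_def D2_def D3_def)
  have fin: "finite D1" "finite D2" "finite D3"
    using finite_derangements by (auto simp: D1_def D2_def D3_def)
  have "sum V D2 = sum (\<lambda>\<sigma>. V (hop \<sigma> k)) D1"
    unfolding D1_def D2_def by (rule sum.reindex_bij_betw[OF bij_betw_hop, symmetric])
  also have "\<dots> = sum V D1"
    by (rule sum.cong) (simp_all add: V_def D1_def perm_weight_hop)
  finally have D2_D1: "sum V D2 = sum V D1" .
  have W: "perm_weight n q w f g \<sigma> = (if cda \<sigma> k then f k else if cdd \<sigma> k then g k else 1) * V \<sigma>"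
    for \<sigma>
    unfolding V_def by (rule perm_weight_split[OF assms])
  have "(\<Sum>\<sigma>\<in>derangements n. perm_weight n q w f g \<sigma>)
      = (\<Sum>\<sigma>\<in>D1. perm_weight n q w f g \<sigma>) + (\<Sum>\<sigma>\<in>D2. perm_weight n q w f g \<sigma>)
        + (\<Sum>\<sigma>\<in>D3. perm_weight n q w f g \<sigma>)"
    unfolding D(1) using fin D(2,3) by (simp add: sum.union_disjoint add.assoc)
  also have "\<dots> = g k * sum V D1 + f k * sum V D2 + sum V D3"
    unfolding sum_distrib_left using exclusive
    by (intro arg_cong2[where f = "(+)"] sum.cong) (auto simp: W D1_def D2_def D3_def)
  also have "\<dots> = (f k + g k) * sum V D1 + sum V D3"
    by (simp add: D2_D1 algebra_simps)
  finally show ?thesis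
    by (simp add: V_def D1_def D3_def)
qed

theorem sum_perm_weight_eq:
  assumes "\<And>z. z \<in> {1..n} \<Longrightarrow> f z + g z = f' z + g' z"
  shows "(\<Sum>\<sigma>\<in>derangements n. perm_weight n q w f g \<sigma>)
       = (\<Sum>\<sigma>\<in>derangements n. perm_weight n q w f' g' \<sigma>)"
proof -
  have "(\<Sum>\<sigma>\<in>derangements n. perm_weight n q w f g \<sigma>)
      = (\<Sum>\<sigma>\<in>derangements n. perm_weight n q w f' g' \<sigma>)"
    if "A \<subseteq> {1..n}" "\<And>z. z \<in> {1..n} \<Longrightarrow> f z + g z = f' z + g' z"
      "\<And>z. z \<in> {1..n} - A \<Longrightarrow> f z = f' z \<and> g z = g' z" for A f g
    using finite_subset[OF that(1) finite_atLeastAtMost] that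
  proof (induction A arbitrary: f g rule: finite_induct)
    case empty
    show ?case
      using empty.prems(3) by (intro sum.cong refl perm_weight_cong) simp
  next
    case (insert k A)
    have k: "k \<in> {1..n}"
      using insert.prems(1) by simp
    have "(\<Sum>\<sigma>\<in>derangements n. perm_weight n q w f g \<sigma>)
        = (\<Sum>\<sigma>\<in>derangements n. perm_weight n q w (f(k := f' k)) (g(k := g' k)) \<sigma>)"
      unfolding sum_perm_weight_split[OF k] using insert.prems(2)[OF k] by simp
    also have "\<dots> = (\<Sum>\<sigma>\<in>derangements n. perm_weight n q w f' g' \<sigma>)"
    proof (rule insert.IH)
      show "A \<subseteq> {1..n}"
        using insert.prems(1) by simp
      show "(f(k := f' k)) z + (g(k := g' k)) z = f' z + g' z" if "z \<in> {1..n}" for z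
        using insert.prems(2)[OF that] by simp
      show "(f(k := f' k)) z = f' z \<and> (g(k := g' k)) z = g' z" if "z \<in> {1..n} - A" for z
        using insert.prems(3)[of z] that by (cases "z = k") simp_all
    qed
    finally show ?case .
  qed
  from this[of "{1..n}" f g] show ?thesis
    using assms by simp
qed

section \<open>Excedances of derangements\<close>

lemma exc_eq_card_inv_less:
  assumes "\<sigma> permutes {1..n}"
  shows "exc n \<sigma> = card {z \<in> {1..n}. inv \<sigma> z < z}"
proof -
  have "\<sigma> ` {i \<in> {1..n}. i < \<sigma> i} = {z \<in> {1..n}. inv \<sigma> z < z}"
  proof (intro equalityI subsetI)
    fix z assume z: "z \<in> {z \<in> {1..n}. inv \<sigma> z < z}"
    show "z \<in> \<sigma> ` {i \<in> {1..n}. i < \<sigma> i}"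
    proof (rule image_eqI)
      show "z = \<sigma> (inv \<sigma> z)"
        by (simp add: permutes_inverses[OF assms])
      show "inv \<sigma> z \<in> {i \<in> {1..n}. i < \<sigma> i}"
        using z permutes_in_image[OF permutes_inv[OF assms], of z]
        by (simp add: permutes_inverses[OF assms])
    qed
  next
    fix z assume "z \<in> \<sigma> ` {i \<in> {1..n}. i < \<sigma> i}"
    then obtain i where "i \<in> {1..n}" "i < \<sigma> i" "z = \<sigma> i"
      by auto
    then show "z \<in> {z \<in> {1..n}. inv \<sigma> z < z}"
      using permutes_in_image[OF assms, of i] permutes_inverses(2)[OF assms, of i] by simp
  qed
  moreover have "inj_on \<sigma> {i \<in> {1..n}. i < \<sigma> i}"
    using permutes_inj[OF assms] by (rule inj_on_subset) (rule subset_UNIV)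
  ultimately show ?thesis
    unfolding exc_def using card_image by fastforce
qed

lemma card_inv_less_derangement:
  assumes "\<sigma> \<in> derangements n"
  shows "card {z \<in> {1..n}. inv \<sigma> z < z} = cpk n \<sigma> + card (cda_set n \<sigma>)"
proof -
  define P where "P = {z \<in> {1..n}. inv \<sigma> z < z \<and> \<sigma> z < z}"
  have "\<sigma> z \<noteq> z" if "z \<in> {1..n}" for z
    using assms that by (simp add: derangements_def)
  then have "{z \<in> {1..n}. inv \<sigma> z < z} = P \<union> cda_set n \<sigma>"
    unfolding P_def cda_set_def cda_def by (auto simp: neq_iff)
  moreover have "card (P \<union> cda_set n \<sigma>) = card P + card (cda_set n \<sigma>)"
    by (rule card_Un_disjoint) (auto simp: P_def cda_set_def cda_def)
  ultimately show ?thesis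
    by (simp add: cpk_def P_def)
qed

lemma card_less_derangement:
  assumes "\<sigma> \<in> derangements n"
  shows "card {z \<in> {1..n}. \<sigma> z < z} = cpk n \<sigma> + card (cdd_set n \<sigma>)"
proof -
  define P where "P = {z \<in> {1..n}. inv \<sigma> z < z \<and> \<sigma> z < z}"
  have "inv \<sigma> z \<noteq> z" if "z \<in> {1..n}" for z
    using inv_derangement[OF assms] that by (simp add: derangements_def)
  then have "{z \<in> {1..n}. \<sigma> z < z} = P \<union> cdd_set n \<sigma>"
    unfolding P_def cdd_set_def cdd_def by (auto simp: neq_iff)
  moreover have "card (P \<union> cdd_set n \<sigma>) = card P + card (cdd_set n \<sigma>)"
    by (rule card_Un_disjoint) (auto simp: P_def cdd_set_def cdd_def)
  ultimately show ?thesis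
    by (simp add: cpk_def P_def)
qed

lemma exc_plus_card_less_derangement:
  assumes "\<sigma> \<in> derangements n"
  shows "exc n \<sigma> + card {z \<in> {1..n}. \<sigma> z < z} = n"
proof -
  have "\<sigma> z \<noteq> z" if "z \<in> {1..n}" for z
    using assms that by (simp add: derangements_def)
  then have "{1..n} = {i \<in> {1..n}. i < \<sigma> i} \<union> {z \<in> {1..n}. \<sigma> z < z}"
    by (fastforce simp: neq_iff)
  moreover have "card ({i \<in> {1..n}. i < \<sigma> i} \<union> {z \<in> {1..n}. \<sigma> z < z})
      = card {i \<in> {1..n}. i < \<sigma> i} + card {z \<in> {1..n}. \<sigma> z < z}"
    by (rule card_Un_disjoint) auto
  ultimately show ?thesis
    unfolding exc_def by (metis card_atLeastAtMost diff_Suc_1)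
qed

lemma exc_derangement: "\<sigma> \<in> derangements n \<Longrightarrow> exc n \<sigma> = cpk n \<sigma> + card (cda_set n \<sigma>)"
  using exc_eq_card_inv_less[OF derangement_permutes] card_inv_less_derangement by simp

lemma card_cpk_cda_cdd_derangement:
  "\<sigma> \<in> derangements n \<Longrightarrow> 2 * cpk n \<sigma> + card (cda_set n \<sigma>) + card (cdd_set n \<sigma>) = n"
  using exc_plus_card_less_derangement exc_derangement card_less_derangement by fastforce

lemma cpk_exc_substitution:
  fixes x t :: "'a::field"
  assumes "1 + x \<noteq> 0" "x + t \<noteq> 0" "1 + x * t \<noteq> 0"
  shows "((1 + x * t) / (1 + x)) ^ (2 * p + d + e) *
      (((1 + x)^2 * t / ((x + t) * (1 + x * t))) ^ p * ((x + t) / (1 + x * t)) ^ (p + d))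
    = t ^ p * ((x + t) / (1 + x)) ^ d * ((1 + x * t) / (1 + x)) ^ e"
proof -
  define K where "K = (1 + x * t) / (1 + x)"
  define X where "X = (1 + x)^2 * t / ((x + t) * (1 + x * t))"
  define Y where "Y = (x + t) / (1 + x * t)"
  have "K * K * X * Y = t"
    using assms by (simp add: K_def X_def Y_def power2_eq_square)
  moreover have "K * Y = (x + t) / (1 + x)"
    using assms by (simp add: K_def Y_def)
  moreover have "K ^ (2 * p + d + e) * (X ^ p * Y ^ (p + d)) = (K * K * X * Y) ^ p * (K * Y) ^ d * K ^ e"
    by (simp only: mult_2 mult_2_right power_add power_mult_distrib mult_ac)
  ultimately show ?thesis
    by (simp add: K_def X_def Y_def)
qed

lemma perm_weight_exc:
  "\<sigma> \<in> derangements n \<Longrightarrow> q ^ cyc n \<sigma> * t ^ exc n \<sigma> = perm_weight n q t (\<lambda>_. t) (\<lambda>_. 1) \<sigma>"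
  by (simp add: perm_weight_const exc_derangement power_add mult.assoc)

lemma perm_weight_substitution:
  fixes x t :: "'a::field"
  assumes "\<sigma> \<in> derangements n" "1 + x \<noteq> 0" "x + t \<noteq> 0" "1 + x * t \<noteq> 0"
  shows "((1 + x * t) / (1 + x)) ^ n * (q ^ cyc n \<sigma>
        * ((1 + x)^2 * t / ((x + t) * (1 + x * t))) ^ cpk n \<sigma> * ((x + t) / (1 + x * t)) ^ exc n \<sigma>)
    = perm_weight n q t (\<lambda>_. (x + t) / (1 + x)) (\<lambda>_. (1 + x * t) / (1 + x)) \<sigma>"
  using cpk_exc_substitution[OF assms(2-4), of "cpk n \<sigma>" "card (cda_set n \<sigma>)" "card (cdd_set n \<sigma>)"]
  unfolding exc_derangement[OF assms(1)] card_cpk_cda_cdd_derangement[OF assms(1)]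
  by (simp add: perm_weight_const ac_simps)

theorem theorem3p9:
  fixes n :: nat and q x t :: real
  assumes "n \<ge> 1"
    and "1 + x \<noteq> 0" and "x + t \<noteq> 0" and "1 + x * t \<noteq> 0"
  shows "(\<Sum>\<sigma>\<in>derangements n. q ^ cyc n \<sigma> * t ^ exc n \<sigma>)
    = ((1 + x * t) / (1 + x)) ^ n *
      (\<Sum>\<sigma>\<in>derangements n. q ^ cyc n \<sigma>
          * ((1 + x)^2 * t / ((x + t) * (1 + x * t))) ^ cpk n \<sigma>
          * ((x + t) / (1 + x * t)) ^ exc n \<sigma>)"
proof -
  let ?K = "(1 + x * t) / (1 + x)"
  let ?summand = "\<lambda>\<sigma>. q ^ cyc n \<sigma> * ((1 + x)^2 * t / ((x + t) * (1 + x * t))) ^ cpk n \<sigma>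
    * ((x + t) / (1 + x * t)) ^ exc n \<sigma>"
  have weights_sum: "t + 1 = (x + t) / (1 + x) + ?K"
    using assms(2) by (simp add: add_divide_distrib[symmetric] field_simps)
  have "(\<Sum>\<sigma>\<in>derangements n. q ^ cyc n \<sigma> * t ^ exc n \<sigma>)
      = (\<Sum>\<sigma>\<in>derangements n. perm_weight n q t (\<lambda>_. t) (\<lambda>_. 1) \<sigma>)"
    by (rule sum.cong) (simp_all add: perm_weight_exc)
  also have "\<dots> = (\<Sum>\<sigma>\<in>derangements n. perm_weight n q t (\<lambda>_. (x + t) / (1 + x)) (\<lambda>_. ?K) \<sigma>)"
    using weights_sum by (intro sum_perm_weight_eq) simp
  also have "\<dots> = (\<Sum>\<sigma>\<in>derangements n. ?K ^ n * ?summand \<sigma>)"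
    by (rule sum.cong) (simp_all add: perm_weight_substitution assms)
  also have "\<dots> = ?K ^ n * (\<Sum>\<sigma>\<in>derangements n. ?summand \<sigma>)"
    by (simp add: sum_distrib_left)
  finally show ?thesis
    by simp
qed

end
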